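(* Let $\boldsymbol{f}\in\mathbb{R}^E$ satisfy $\boldsymbol{u}^-_e<\boldsymbol{f}_e<\boldsymbol{u}^+_e$ for all $e$ and $\boldsymbol{c}^\top\boldsymbol{f}>F^*$. Let $\tilde{\boldsymbol{g}}\in\mathbb{R}^E$ satisfy $\|\mathbf{L}(\boldsymbol{f})^{-1}(\tilde{\boldsymbol{g}}-\boldsymbol{g}(\boldsymbol{f}))\|_\infty\le\varepsilon$ for some $\varepsilon\in(0,1/2]$, and $\tilde{\boldsymbol{\ell}}\in\mathbb{R}^E_{>0}$ satisfy $\tilde{\boldsymbol{\ell}}\approx_2\boldsymbol{\ell}(\boldsymbol{f})$. Let $\boldsymbol{\Delta}$ satisfy $\mathbf{B}^\top\boldsymbol{\Delta}=0$ and $\tilde{\boldsymbol{g}}^\top\boldsymbol{\Delta}/\|\tilde{\mathbf{L}}\boldsymbol{\Delta}\|_1\le-\kappa$ for some $\kappa\in(0,1)$. Then $\frac{|\boldsymbol{c}^\top\boldsymbol{\Delta}|}{\boldsymbol{c}^\top\boldsymbol{f}-F^*}\le|\tilde{\boldsymbol{g}}^\top\boldsymbol{\Delta}|/(\kappa m)$.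
   Context: Setting: $G=(V,E)$ is a directed graph with $m=|E|$ edges and edge-vertex incidence matrix $\mathbf{B}$ (row of edge $(a,b)$ has $+1$ at $a$, $-1$ at $b$); demands $\boldsymbol{d}\in\mathbb{Z}^V$, lower/upper capacities $\boldsymbol{u}^-,\boldsymbol{u}^+\in\mathbb{Z}^E$, and costs $\boldsymbol{c}\in\mathbb{Z}^E$ are integers bounded in absolute value by $U$. $F^*=\min\{\boldsymbol{c}^\top\boldsymbol{f}:\mathbf{B}^\top\boldsymbol{f}=\boldsymbol{d},\ \boldsymbol{u}^-\le\boldsymbol{f}\le\boldsymbol{u}^+\}$. Let $\alpha=1/(1000\log(mU))$. Lengths $\boldsymbol{\ell}(\boldsymbol{f})_e=(\boldsymbol{u}^+_e-\boldsymbol{f}_e)^{-1-\alpha}+(\boldsymbol{f}_e-\boldsymbol{u}^-_e)^{-1-\alpha}$; gradients $\boldsymbol{g}(\boldsymbol{f})_e=20m(\boldsymbol{c}^\top\boldsymbol{f}-F^* )^{-1}\boldsymbol{c}_e+\alpha(\boldsymbol{u}^+_e-\boldsymbol{f}_e)^{-1-\alpha}-\alpha(\boldsymbol{f}_e-\boldsymbol{u}^-_e)^{-1-\alpha}$ (the gradient of $\Phi(\boldsymbol{f})=20m\log(\boldsymbol{c}^\top\boldsymbol{f}-F^* )+\sum_e((\boldsymbol{u}^+_e-\boldsymbol{f}_e)^{-\alpha}+(\boldsymbol{f}_e-\boldsymbol{u}^-_e)^{-\alpha})$). $\mathbf{L}(\boldsymbol{f})=\mathrm{diag}(\boldsymbol{\ell}(\boldsymbol{f}))$,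 $\tilde{\mathbf{L}}=\mathrm{diag}(\tilde{\boldsymbol{\ell}})$. $\boldsymbol{x}\approx_\beta\boldsymbol{y}$ means $\beta^{-1}\boldsymbol{y}_i\le\boldsymbol{x}_i\le\beta\boldsymbol{y}_i$ for all $i$. *)

theory Defs
  imports Complex_Main
begin

text \<open>The incidence matrix B has row e with +1 at src e and -1 at dst e,
  so (B^T f)_v = sum of f over edges leaving v minus sum over edges entering v.\<close>

definition BT :: "'e set \<Rightarrow> ('e \<Rightarrow> 'v) \<Rightarrow> ('e \<Rightarrow> 'v) \<Rightarrow> ('e \<Rightarrow> real) \<Rightarrow> 'v \<Rightarrow> real" where
  "BT E src dst f v = (\<Sum>e\<in>E. (if src e = v then 1 else 0) * f e - (if dst e = v then 1 else 0) * f e)"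

definition feasible ::
  "'v set \<Rightarrow> 'e set \<Rightarrow> ('e \<Rightarrow> 'v) \<Rightarrow> ('e \<Rightarrow> 'v) \<Rightarrow> ('v \<Rightarrow> int) \<Rightarrow> ('e \<Rightarrow> int) \<Rightarrow> ('e \<Rightarrow> int)
   \<Rightarrow> ('e \<Rightarrow> real) \<Rightarrow> bool" where
  "feasible V E src dst d um up f \<longleftrightarrow>
     (\<forall>v\<in>V. BT E src dst f v = real_of_int (d v)) \<and>
     (\<forall>e\<in>E. real_of_int (um e) \<le> f e \<and> f e \<le> real_of_int (up e))"

definition Fstar ::
  "'v set \<Rightarrow> 'e set \<Rightarrow> ('e \<Rightarrow> 'v) \<Rightarrow> ('e \<Rightarrow> 'v) \<Rightarrow> ('v \<Rightarrow> int) \<Rightarrow> ('e \<Rightarrow> int) \<Rightarrow> ('e \<Rightarrow> int)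
   \<Rightarrow> ('e \<Rightarrow> int) \<Rightarrow> real" where
  "Fstar V E src dst d um up c =
     Inf ((\<lambda>f. \<Sum>e\<in>E. real_of_int (c e) * f e) ` {f. feasible V E src dst d um up f})"

definition alpha :: "nat \<Rightarrow> real \<Rightarrow> real" where
  "alpha m U = 1 / (1000 * log 2 (real m * U))"

definition lengths :: "real \<Rightarrow> ('e \<Rightarrow> int) \<Rightarrow> ('e \<Rightarrow> int) \<Rightarrow> ('e \<Rightarrow> real) \<Rightarrow> 'e \<Rightarrow> real" where
  "lengths a um up f e = (real_of_int (up e) - f e) powr (-1 - a) + (f e - real_of_int (um e)) powr (-1 - a)"

definition grad :: "nat \<Rightarrow> real \<Rightarrow> real \<Rightarrow> ('e \<Rightarrow> int) \<Rightarrow> ('e \<Rightarrow> int) \<Rightarrow> ('e \<Rightarrow> int) \<Rightarrow> 'e set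
   \<Rightarrow> ('e \<Rightarrow> real) \<Rightarrow> 'e \<Rightarrow> real" where
  "grad m a Fs c um up E f e =
     20 * real m * inverse ((\<Sum>e'\<in>E. real_of_int (c e') * f e') - Fs) * real_of_int (c e)
     + a * (real_of_int (up e) - f e) powr (-1 - a) - a * (f e - real_of_int (um e)) powr (-1 - a)"

end

theory Submission
  imports Defs
begin

(* Let G = c^T f - F^* be the optimality gap and K = 20 m / G. Then g(f) = K c + alpha (A - B)
   with A, B the two barrier terms, and |A - B| <= l(f), so every coordinate satisfies
   |gt_e - K c_e| <= 2 (alpha + eps) lt_e. Pairing with Delta and using
   gt^T Delta <= -kappa |Lt Delta|_1 gives
   kappa K |c^T Delta| <= (kappa + 2 (alpha + eps)) |gt^T Delta| <= 20 |gt^T Delta|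
   as long as alpha <= 9, which is the claim.
   The bound alpha > 9 forces m = 1 and U < 2: a single self-loop with capacities in [-1, 1],
   where F^* is attained at an end of the capacity interval and G is the distance x to it.
   There the claim reduces to a one-variable estimate: if the length x^(-1-alpha) + y^(-1-alpha)
   is below 2/x, then Bernoulli's inequality bounds the barrier part of the gradient by 12/x,
   so the gradient is at least 8/x and its approximation gt cannot be smaller than kappa/x. *)

lemma descent_direction_cost_bound:
  fixes g l c \<Delta> :: "'e \<Rightarrow> real"
  assumes \<kappa>: "0 < \<kappa>" and \<beta>: "0 \<le> \<beta>" and K: "0 \<le> K"
    and close: "\<forall>e\<in>E. \<bar>g e - K * c e\<bar> \<le> \<beta> * \<bar>l e\<bar>"
    and descent: "(\<Sum>e\<in>E. g e * \<Delta> e) \<le> - \<kappa> * (\<Sum>e\<in>E. \<bar>l e * \<Delta> e\<bar>)"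
  shows "\<kappa> * (K * \<bar>\<Sum>e\<in>E. c e * \<Delta> e\<bar>) \<le> (\<kappa> + \<beta>) * \<bar>\<Sum>e\<in>E. g e * \<Delta> e\<bar>"
proof -
  define Q where "Q = (\<Sum>e\<in>E. g e * \<Delta> e)"
  define S where "S = (\<Sum>e\<in>E. \<bar>l e * \<Delta> e\<bar>)"
  have "K * (\<Sum>e\<in>E. c e * \<Delta> e) = Q - (\<Sum>e\<in>E. (g e - K * c e) * \<Delta> e)"
    unfolding Q_def by (simp add: sum_distrib_left sum_subtractf algebra_simps)
  moreover have "\<bar>\<Sum>e\<in>E. (g e - K * c e) * \<Delta> e\<bar> \<le> \<beta> * S"
  proof -
    have "\<bar>\<Sum>e\<in>E. (g e - K * c e) * \<Delta> e\<bar> \<le> (\<Sum>e\<in>E. \<bar>g e - K * c e\<bar> * \<bar>\<Delta> e\<bar>)"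
      using sum_abs[of "\<lambda>e. (g e - K * c e) * \<Delta> e" E] by (simp add: abs_mult)
    also have "\<dots> \<le> (\<Sum>e\<in>E. \<beta> * \<bar>l e * \<Delta> e\<bar>)"
    proof (rule sum_mono)
      fix e assume "e \<in> E"
      then have "\<bar>g e - K * c e\<bar> * \<bar>\<Delta> e\<bar> \<le> \<beta> * \<bar>l e\<bar> * \<bar>\<Delta> e\<bar>"
        using close by (intro mult_right_mono) auto
      then show "\<bar>g e - K * c e\<bar> * \<bar>\<Delta> e\<bar> \<le> \<beta> * \<bar>l e * \<Delta> e\<bar>"
        by (simp add: abs_mult mult.assoc)
    qed
    finally show ?thesis unfolding S_def by (simp add: sum_distrib_left)
  qed
  ultimately have "K * \<bar>\<Sum>e\<in>E. c e * \<Delta> e\<bar> \<le> \<bar>Q\<bar> + \<beta> * S"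
    using K by (simp add: abs_mult[symmetric])
  then have "\<kappa> * (K * \<bar>\<Sum>e\<in>E. c e * \<Delta> e\<bar>) \<le> \<kappa> * (\<bar>Q\<bar> + \<beta> * S)"
    using \<kappa> by (intro mult_left_mono) auto
  also have "\<dots> = \<kappa> * \<bar>Q\<bar> + \<beta> * (\<kappa> * S)" by (simp add: algebra_simps)
  also have "\<dots> \<le> \<kappa> * \<bar>Q\<bar> + \<beta> * \<bar>Q\<bar>"
    using descent \<beta> unfolding Q_def[symmetric] S_def[symmetric] by (simp add: mult_left_mono)
  finally show ?thesis unfolding Q_def by (simp add: algebra_simps)
qed

lemma barrier_arith:
  fixes a s p r :: real
  assumes a: "0 \<le> a" and s: "0 < s" "s \<le> 1" and p: "1 + a * s \<le> p"
    and r: "(1 - s) / (1 + s) / p \<le> r" and pr: "p + r < 2"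
  shows "a * (p - r) \<le> 12"
proof -
  define t where "t = (1 - s) / (1 + s)"
  define d where "d = p - 1"
  have as_nonneg: "0 \<le> a * s" using a s by simp
  have d: "a * s \<le> d" using p unfolding d_def by simp
  have p1: "1 \<le> p" using p as_nonneg by simp
  have t: "t \<le> 1" "1 - t \<le> 2 * s" using s unfolding t_def by (auto simp: field_simps)
  have "p + t / p < 2" using r pr unfolding t_def by simp
  then have "p * p + t < 2 * p" using p1 by (simp add: field_simps)
  then have dd: "d * d < 2 * s" using t unfolding d_def by (simp add: algebra_simps)
  have "(a * d) * (a * d) \<le> 2 * (a * d)"
  proof -
    have "(a * d) * (a * d) = a * a * (d * d)" by (simp add: algebra_simps)
    also have "\<dots> \<le> a * a * (2 * s)" using dd a by (intro mult_left_mono) auto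
    also have "\<dots> = 2 * a * (a * s)" by (simp add: algebra_simps)
    also have "\<dots> \<le> 2 * (a * d)" using d a by (simp add: mult_left_mono)
    finally show ?thesis .
  qed
  moreover have "0 \<le> a * d" using a as_nonneg d by simp
  ultimately have ad: "a * d \<le> 2"
    using mult_le_cancel_right[of "a * d" "a * d" 2] by auto
  have as2: "a * s \<le> 2"
  proof -
    have "a * (a * s) \<le> a * d" using d a by (rule mult_left_mono)
    have "(a * s)\<^sup>2 = (a * (a * s)) * s" by (simp add: power2_eq_square algebra_simps)
    also have "\<dots> \<le> 2 * 1" using \<open>a * (a * s) \<le> a * d\<close> ad s by (intro mult_mono) auto
    finally have "(a * s)\<^sup>2 \<le> 2\<^sup>2" by simp
    then show ?thesis by (rule power2_le_imp_le) simp
  qed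
  have "p - r \<le> p - t / p" using r unfolding t_def by simp
  also have "\<dots> = (p * p - t) / p" using p1 by (simp add: field_simps)
  also have "\<dots> \<le> (p * p - t) / 1"
    using p1 t mult_mono[OF p1 p1] by (intro divide_left_mono) auto
  also have "\<dots> \<le> 4 * s + 2 * d" using dd t unfolding d_def by (simp add: algebra_simps)
  finally have "a * (p - r) \<le> a * (4 * s + 2 * d)" using a by (rule mult_left_mono)
  then show ?thesis using ad as2 by (simp add: algebra_simps)
qed

lemma barrier_diff_le:
  fixes a x y :: real
  assumes a: "0 < a" and x: "0 < x" and y: "0 < y" and xy: "x + y \<le> 2"
    and small: "x powr (-1 - a) + y powr (-1 - a) < 2 / x"
  shows "a * (x powr (-1 - a) - y powr (-1 - a)) \<le> 12 / x"
proof (cases "y \<le> x")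
  case True
  then have "x powr (-1 - a) \<le> y powr (-1 - a)" using y a by (intro powr_mono2') auto
  then have "a * (x powr (-1 - a) - y powr (-1 - a)) \<le> 0" using a by (simp add: mult_nonneg_nonpos)
  moreover have "0 \<le> 12 / x" using x by simp
  ultimately show ?thesis by linarith
next
  case False
  define s where "s = 1 - x"
  have s: "0 < s" "s < 1" using False xy x unfolding s_def by auto
  have x_eq: "x = 1 - s" unfolding s_def by simp
  have y_pow: "(1 + s) powr (-1 - a) \<le> y powr (-1 - a)"
    using xy y a unfolding x_eq by (intro powr_mono2') auto
  define p where "p = x powr (- a)"
  define r where "r = x * (1 + s) powr (-1 - a)"
  have x_pow: "x * x powr (-1 - a) = p"
    unfolding p_def using x by (simp add: powr_diff powr_minus field_simps)
  have p: "1 + a * s \<le> p"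
  proof -
    have "a * s \<le> a * - ln (1 - s)" using s a ln_le_minus_one[of "1 - s"] by (intro mult_left_mono) auto
    also have "1 + \<dots> \<le> exp (- a * ln (1 - s))" using exp_ge_add_one_self[of "- a * ln (1 - s)"] by simp
    also have "\<dots> = p" unfolding p_def x_eq using s by (simp add: powr_def)
    finally show ?thesis by simp
  qed
  have r: "(1 - s) / (1 + s) / p \<le> r"
  proof -
    have "1 / p = (1 / (1 - s)) powr (- a)"
      unfolding p_def x_eq using s by (simp add: powr_divide powr_minus divide_inverse inverse_powr)
    also have "\<dots> \<le> (1 + s) powr (- a)"
      using s a by (intro powr_mono2') (auto simp: field_simps)
    finally have "(1 - s) * (1 / p) / (1 + s) \<le> (1 - s) * (1 + s) powr (- a) / (1 + s)"
      using s by (intro divide_right_mono mult_left_mono) auto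
    also have "\<dots> = r"
      unfolding r_def x_eq using s by (simp add: powr_diff powr_minus field_simps)
    finally show ?thesis by (simp add: mult.commute)
  qed
  have "x * (x powr (-1 - a) + y powr (-1 - a)) < 2"
    using small x by (simp add: field_simps)
  then have "p + r < 2"
    using y_pow x unfolding r_def x_pow[symmetric] by (smt (verit) distrib_left mult_left_mono)
  then have "a * (p - r) \<le> 12" using a s p r by (intro barrier_arith) auto
  moreover have "x * (a * (x powr (-1 - a) - y powr (-1 - a))) \<le> a * (p - r)"
    using y_pow x a unfolding r_def x_pow[symmetric]
    by (simp add: algebra_simps mult_left_mono)
  ultimately show ?thesis using x by (simp add: field_simps)
qed

lemma approx_barrier_gradient_ge:
  fixes a x y g l \<epsilon> \<kappa> :: real
  defines "L \<equiv> x powr (-1 - a) + y powr (-1 - a)"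
  assumes a: "0 < a" and x: "0 < x" and y: "0 < y" and xy: "x + y \<le> 2"
    and \<kappa>: "0 < \<kappa>" "\<kappa> \<le> 1" and \<epsilon>: "\<epsilon> \<le> 1/2"
    and g: "\<bar>g - (20 / x + a * (y powr (-1 - a) - x powr (-1 - a)))\<bar> \<le> \<epsilon> * L"
    and l: "L / 2 \<le> l" and \<kappa>_l: "\<kappa> * l \<le> \<bar>g\<bar>"
  shows "\<kappa> / x \<le> \<bar>g\<bar>"
proof (rule ccontr)
  define i where "i = 1 / x"
  have i: "0 < i" unfolding i_def using x by simp
  then have "\<kappa> * i \<le> 1 * i" using \<kappa> by (intro mult_right_mono) auto
  assume "\<not> \<kappa> / x \<le> \<bar>g\<bar>"
  then have g_small: "\<bar>g\<bar> < \<kappa> * i" unfolding i_def by simp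
  then have "\<kappa> * l < \<kappa> * i" using \<kappa>_l by linarith
  then have "l < i" by (rule mult_left_less_imp_less) (use \<kappa> in linarith)
  then have L_small: "L < 2 * i" using l by linarith
  then have "x powr (-1 - a) + y powr (-1 - a) < 2 / x" unfolding L_def i_def by simp
  then have "a * (x powr (-1 - a) - y powr (-1 - a)) \<le> 12 / x" by (rule barrier_diff_le[OF a x y xy])
  moreover have "12 / x = 12 * i" "20 / x = 20 * i" unfolding i_def by simp_all
  ultimately have "8 * i \<le> 20 / x + a * (y powr (-1 - a) - x powr (-1 - a))"
    by (simp add: right_diff_distrib)
  moreover have "\<epsilon> * L \<le> i"
  proof -
    have "0 \<le> L" unfolding L_def by simp
    with \<epsilon> have "\<epsilon> * L \<le> 1 / 2 * L" by (rule mult_right_mono)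
    then show ?thesis using L_small by linarith
  qed
  ultimately have "7 * i \<le> \<bar>g\<bar>" using g by linarith
  then show False using g_small \<open>\<kappa> * i \<le> 1 * i\<close> i by linarith
qed

lemma cInf_linear_image_interval:
  fixes k lo hi :: real
  assumes "lo \<le> hi"
  shows "Inf ((\<lambda>t. k * t) ` {lo..hi}) = min (k * lo) (k * hi)"
proof (rule cInf_eq_minimum)
  show "min (k * lo) (k * hi) \<in> (\<lambda>t. k * t) ` {lo..hi}"
    using assms by (auto simp: min_def intro: rev_image_eqI)
next
  fix u assume "u \<in> (\<lambda>t. k * t) ` {lo..hi}"
  then obtain t where "lo \<le> t" "t \<le> hi" "u = k * t" by auto
  then show "min (k * lo) (k * hi) \<le> u"
    by (cases "0 \<le> k") (auto simp: min_def intro: mult_left_mono mult_left_mono_neg)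
qed

lemma abs_bound_ge_one_of_less:
  fixes a b :: int
  assumes "a < b" "\<bar>real_of_int a\<bar> \<le> U" "\<bar>real_of_int b\<bar> \<le> U"
  shows "1 \<le> U"
proof -
  have "1 \<le> \<bar>a\<bar> \<or> 1 \<le> \<bar>b\<bar>" using assms(1) by linarith
  then have "1 \<le> \<bar>real_of_int a\<bar> \<or> 1 \<le> \<bar>real_of_int b\<bar>" unfolding of_int_abs[symmetric] by linarith
  then show ?thesis using assms(2,3) by linarith
qed

lemma lengths_pos:
  assumes "real_of_int (um e) < f e" "f e < real_of_int (up e)"
  shows "0 < lengths a um up f e"
  using assms unfolding lengths_def by (simp add: add_pos_pos)

lemma grad_minus_cost_term_abs_le:
  assumes "real_of_int (um e) < f e" "f e < real_of_int (up e)" "0 \<le> a"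
  shows "\<bar>grad m a Fs c um up E f e - 20 * real m / ((\<Sum>e'\<in>E. real_of_int (c e') * f e') - Fs) * c e\<bar>
           \<le> a * lengths a um up f e"
proof -
  define A where "A = (real_of_int (up e) - f e) powr (-1 - a)"
  define B where "B = (f e - real_of_int (um e)) powr (-1 - a)"
  have "0 \<le> A" "0 \<le> B" unfolding A_def B_def by simp_all
  then have "\<bar>A - B\<bar> \<le> A + B" by arith
  then have "\<bar>a * (A - B)\<bar> \<le> a * (A + B)"
    using assms(3) by (simp add: abs_mult mult_left_mono)
  then show ?thesis
    unfolding grad_def lengths_def A_def[symmetric] B_def[symmetric]
    by (simp add: divide_inverse algebra_simps)
qed

lemma relative_cost_change_le:
  fixes E :: "'e set" and c um up :: "'e \<Rightarrow> int" and f gt lt \<Delta> :: "'e \<Rightarrow> real" and Fs :: real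
  defines "G \<equiv> (\<Sum>e\<in>E. real_of_int (c e) * f e) - Fs"
  assumes E: "finite E" "E \<noteq> {}" and G: "0 < G"
    and interior: "\<forall>e\<in>E. real_of_int (um e) < f e \<and> f e < real_of_int (up e)"
    and a: "0 \<le> a" and \<epsilon>: "0 \<le> \<epsilon>" and \<kappa>: "0 < \<kappa>" and small: "\<kappa> + 2 * (a + \<epsilon>) \<le> 20"
    and g_approx: "\<forall>e\<in>E. \<bar>gt e - grad (card E) a Fs c um up E f e\<bar> \<le> \<epsilon> * lengths a um up f e"
    and l_approx: "\<forall>e\<in>E. lengths a um up f e \<le> 2 * lt e"
    and descent: "(\<Sum>e\<in>E. gt e * \<Delta> e) \<le> - \<kappa> * (\<Sum>e\<in>E. \<bar>lt e * \<Delta> e\<bar>)"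
  shows "\<bar>\<Sum>e\<in>E. real_of_int (c e) * \<Delta> e\<bar> / G \<le> \<bar>\<Sum>e\<in>E. gt e * \<Delta> e\<bar> / (\<kappa> * card E)"
proof -
  define K where "K = 20 * real (card E) / G"
  have m: "0 < real (card E)" using E by (simp add: card_gt_0_iff)
  then have K: "0 \<le> K" unfolding K_def using G by simp
  have close: "\<forall>e\<in>E. \<bar>gt e - K * c e\<bar> \<le> 2 * (a + \<epsilon>) * \<bar>lt e\<bar>"
  proof
    fix e assume e: "e \<in> E"
    define L where "L = lengths a um up f e"
    have "\<bar>gt e - grad (card E) a Fs c um up E f e\<bar> \<le> \<epsilon> * L"
      using g_approx e unfolding L_def by blast
    moreover have "\<bar>grad (card E) a Fs c um up E f e - K * c e\<bar> \<le> a * L"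
      using interior e a unfolding K_def G_def L_def by (intro grad_minus_cost_term_abs_le) auto
    ultimately have "\<bar>gt e - K * c e\<bar> \<le> (a + \<epsilon>) * L" by (simp add: algebra_simps)
    also have "\<dots> \<le> (a + \<epsilon>) * (2 * \<bar>lt e\<bar>)"
    proof (rule mult_left_mono)
      show "L \<le> 2 * \<bar>lt e\<bar>" using l_approx e abs_ge_self[of "lt e"] unfolding L_def by fastforce
    qed (use a \<epsilon> in simp)
    finally show "\<bar>gt e - K * c e\<bar> \<le> 2 * (a + \<epsilon>) * \<bar>lt e\<bar>" by (simp add: algebra_simps)
  qed
  define C where "C = \<bar>\<Sum>e\<in>E. real_of_int (c e) * \<Delta> e\<bar>"
  define Q where "Q = \<bar>\<Sum>e\<in>E. gt e * \<Delta> e\<bar>"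
  have "\<kappa> * (K * C) \<le> (\<kappa> + 2 * (a + \<epsilon>)) * Q"
    using descent_direction_cost_bound[OF \<kappa> _ K close descent] a \<epsilon> unfolding C_def Q_def by simp
  also have "\<dots> \<le> 20 * Q" using small unfolding Q_def by (intro mult_right_mono) auto
  also have "\<kappa> * (K * C) = 20 * (\<kappa> * real (card E) * C / G)" unfolding K_def by simp
  finally have "\<kappa> * real (card E) * C \<le> Q * G" using G by (simp add: divide_le_eq)
  then show ?thesis unfolding C_def[symmetric] Q_def[symmetric] using \<kappa> m G
    by (simp add: divide_le_eq le_divide_eq mult.commute mult.left_commute)
qed

lemma single_edge_relative_cost_change_le:
  fixes c um up :: "'e \<Rightarrow> int" and f gt lt \<Delta> :: "'e \<Rightarrow> real"
  assumes interior: "real_of_int (um e) < f e" "f e < real_of_int (up e)"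
    and width: "up e - um e \<le> 2" and c: "\<bar>c e\<bar> \<le> 1"
    and Fs: "Fs = min (real_of_int (c e) * um e) (real_of_int (c e) * up e)"
    and a: "0 < a" and \<kappa>: "0 < \<kappa>" "\<kappa> \<le> 1" and \<epsilon>: "\<epsilon> \<le> 1/2"
    and g_approx: "\<bar>gt e - grad 1 a Fs c um up {e} f e\<bar> \<le> \<epsilon> * lengths a um up f e"
    and l_approx: "lengths a um up f e / 2 \<le> lt e"
    and descent: "gt e * \<Delta> e \<le> - \<kappa> * \<bar>lt e * \<Delta> e\<bar>"
  shows "\<bar>c e * \<Delta> e\<bar> / (c e * f e - Fs) \<le> \<bar>gt e * \<Delta> e\<bar> / \<kappa>"
proof (cases "\<Delta> e = 0")
  case False
  define x where "x = f e - real_of_int (um e)"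
  define y where "y = real_of_int (up e) - f e"
  have xy: "0 < x" "0 < y" "x + y \<le> 2" using interior width unfolding x_def y_def by auto
  have "\<kappa> * \<bar>lt e * \<Delta> e\<bar> \<le> \<bar>gt e * \<Delta> e\<bar>"
    using descent abs_ge_minus_self[of "gt e * \<Delta> e"] by linarith
  then have "(\<kappa> * \<bar>lt e\<bar>) * \<bar>\<Delta> e\<bar> \<le> \<bar>gt e\<bar> * \<bar>\<Delta> e\<bar>" by (simp add: abs_mult mult.assoc)
  then have "\<kappa> * \<bar>lt e\<bar> \<le> \<bar>gt e\<bar>" using False by simp
  moreover have "\<kappa> * lt e \<le> \<kappa> * \<bar>lt e\<bar>" using \<kappa> by (simp add: mult_left_mono)
  ultimately have \<kappa>_l: "\<kappa> * lt e \<le> \<bar>gt e\<bar>" by linarith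
  have grad: "grad 1 a Fs c um up {e} f e
      = 20 * c e / (c e * f e - Fs) + a * (y powr (-1 - a) - x powr (-1 - a))"
    unfolding grad_def x_def y_def by (simp add: divide_inverse algebra_simps)
  have lengths: "lengths a um up f e = x powr (-1 - a) + y powr (-1 - a)"
    unfolding lengths_def x_def y_def by simp
  have "c e = 0 \<or> c e = 1 \<or> c e = -1" using c by auto
  then have "\<kappa> * \<bar>c e\<bar> \<le> \<bar>gt e\<bar> * (c e * f e - Fs)"
  proof (elim disjE)
    assume "c e = 1"
    then have "c e * f e - Fs = x" using Fs interior unfolding x_def by simp
    then have "\<kappa> / x \<le> \<bar>gt e\<bar>"
      using g_approx l_approx \<kappa>_l a \<kappa> \<epsilon> xy \<open>c e = 1\<close> unfolding grad lengths
      by (intro approx_barrier_gradient_ge[where y = y and l = "lt e" and \<epsilon> = \<epsilon>]) auto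
    then show ?thesis using \<open>c e = 1\<close> \<open>c e * f e - Fs = x\<close> xy by (simp add: divide_le_eq mult.commute)
  next
    assume "c e = -1"
    then have "c e * f e - Fs = y" using Fs interior unfolding y_def by simp
    then have "- gt e - (20 / y + a * (x powr (-1 - a) - y powr (-1 - a)))
        = - (gt e - grad 1 a Fs c um up {e} f e)"
      using \<open>c e = -1\<close> unfolding grad by (simp add: algebra_simps)
    then have "\<kappa> / y \<le> \<bar>- gt e\<bar>"
      using g_approx l_approx \<kappa>_l a \<kappa> \<epsilon> xy unfolding lengths
      by (intro approx_barrier_gradient_ge[where y = x and l = "lt e" and \<epsilon> = \<epsilon>])
        (simp_all add: add.commute)
    then show ?thesis using \<open>c e = -1\<close> \<open>c e * f e - Fs = y\<close> xy by (simp add: divide_le_eq mult.commute)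
  qed (simp add: Fs)
  then have "\<kappa> * \<bar>c e\<bar> * \<bar>\<Delta> e\<bar> \<le> \<bar>gt e\<bar> * (c e * f e - Fs) * \<bar>\<Delta> e\<bar>"
    by (simp add: mult_right_mono)
  then show ?thesis
  proof (cases "0 < c e * f e - Fs")
    case False
    then show ?thesis using \<kappa> by (simp add: divide_nonneg_nonpos order.trans[of _ 0])
  qed (use \<kappa> in \<open>simp add: divide_le_eq le_divide_eq abs_mult mult.commute mult.left_commute\<close>)
qed simp

lemma BT_singleton:
  "BT {e} src dst h v = (if src e = v then h e else 0) - (if dst e = v then h e else 0)"
  unfolding BT_def by simp

lemma Fstar_self_loop:
  fixes E :: "'e set" and h :: "'e \<Rightarrow> real"
  assumes E: "E = {e}" and loop: "src e = dst e" and h: "feasible V E src dst d um up h"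
  shows "Fstar V E src dst d um up c = min (real_of_int (c e) * um e) (real_of_int (c e) * up e)"
proof -
  have feasible_iff: "feasible V E src dst d um up h' \<longleftrightarrow> h' e \<in> {real_of_int (um e)..up e}"
    for h' :: "'e \<Rightarrow> real"
    using h unfolding feasible_def E BT_singleton loop by auto
  have "(\<lambda>h'. h' e) ` {h'. feasible V E src dst d um up h'} = {real_of_int (um e)..up e}"
  proof
    show "{real_of_int (um e)..up e} \<subseteq> (\<lambda>h'. h' e) ` {h'. feasible V E src dst d um up h'}"
    proof
      fix t assume "t \<in> {real_of_int (um e)..up e}"
      then show "t \<in> (\<lambda>h'. h' e) ` {h'. feasible V E src dst d um up h'}"
        by (intro image_eqI[where x = "\<lambda>_. t"]) (simp_all add: feasible_iff)
    qed
  qed (auto simp: feasible_iff)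
  moreover have "um e \<le> up e" using feasible_iff h by simp
  ultimately show ?thesis
    unfolding Fstar_def using cInf_linear_image_interval[of "um e" "up e" "c e"]
    by (simp add: E image_image[symmetric, of "\<lambda>t. real_of_int (c e) * t" "\<lambda>h'. h' e"])
qed

lemma alpha_nonneg:
  assumes "1 \<le> m" "1 \<le> U"
  shows "0 \<le> alpha m U"
proof -
  have "1 * 1 \<le> real m * U" using assms by (intro mult_mono) auto
  then show ?thesis unfolding alpha_def by simp
qed

lemma alpha_large_imp_trivial_size:
  assumes m: "1 \<le> m" and U: "1 \<le> U" and large: "1 / 1000 < alpha m U"
  shows "m = 1" "U < 2"
proof -
  define L where "L = log 2 (real m * U)"
  have "0 < 1 / (1000 * L)" using large unfolding alpha_def L_def by linarith
  then have "0 < L" by (simp add: zero_less_divide_iff)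
  moreover have "1 / 1000 < 1 / (1000 * L)" using large unfolding alpha_def L_def .
  ultimately have "L < 1" by (simp add: field_simps)
  moreover have "0 < real m * U" using m U by simp
  ultimately have "real m * U < 2" unfolding L_def by (simp add: log_less_iff)
  moreover have "real m * 1 \<le> real m * U" using U by (intro mult_left_mono) auto
  moreover have "1 * U \<le> real m * U" using m U by (intro mult_right_mono) auto
  ultimately have "m < 2" "U < 2" by simp_all
  then show "m = 1" "U < 2" using m by simp_all
qed

theorem lemma4p8:
  fixes V :: "'v set" and E :: "'e set" and src dst :: "'e \<Rightarrow> 'v"
    and d :: "'v \<Rightarrow> int" and um up c :: "'e \<Rightarrow> int" and U :: real
    and f gt lt \<Delta> :: "'e \<Rightarrow> real" and \<epsilon> \<kappa> :: real
  assumes finV: "finite V" and finE: "finite E"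
    and ends: "\<forall>e\<in>E. src e \<in> V \<and> dst e \<in> V"
    and bd_d: "\<forall>v\<in>V. \<bar>real_of_int (d v)\<bar> \<le> U"
    and bd_e: "\<forall>e\<in>E. \<bar>real_of_int (um e)\<bar> \<le> U \<and> \<bar>real_of_int (up e)\<bar> \<le> U \<and> \<bar>real_of_int (c e)\<bar> \<le> U"
    and feas: "\<exists>h. feasible V E src dst d um up h"
    and f_int: "\<forall>e\<in>E. real_of_int (um e) < f e \<and> f e < real_of_int (up e)"
    and f_gap: "(\<Sum>e\<in>E. real_of_int (c e) * f e) > Fstar V E src dst d um up c"
    and eps: "0 < \<epsilon>" "\<epsilon> \<le> 1/2"
    and g_approx: "\<forall>e\<in>E. \<bar>gt e - grad (card E) (alpha (card E) U) (Fstar V E src dst d um up c) c um up E f e\<bar>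
                          / lengths (alpha (card E) U) um up f e \<le> \<epsilon>"
    and lt_pos: "\<forall>e\<in>E. lt e > 0"
    and lt_approx: "\<forall>e\<in>E. lengths (alpha (card E) U) um up f e / 2 \<le> lt e
                           \<and> lt e \<le> 2 * lengths (alpha (card E) U) um up f e"
    and circ: "\<forall>v\<in>V. BT E src dst \<Delta> v = 0"
    and kap: "0 < \<kappa>" "\<kappa> < 1"
    and desc: "(\<Sum>e\<in>E. gt e * \<Delta> e) / (\<Sum>e\<in>E. \<bar>lt e * \<Delta> e\<bar>) \<le> - \<kappa>"
  shows "\<bar>\<Sum>e\<in>E. real_of_int (c e) * \<Delta> e\<bar> / ((\<Sum>e\<in>E. real_of_int (c e) * f e) - Fstar V E src dst d um up c)
           \<le> \<bar>\<Sum>e\<in>E. gt e * \<Delta> e\<bar> / (\<kappa> * real (card E))"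
proof -
  let ?a = "alpha (card E) U" and ?Fs = "Fstar V E src dst d um up c"
  define S where "S = (\<Sum>e\<in>E. \<bar>lt e * \<Delta> e\<bar>)"
  have "S \<noteq> 0" using desc kap unfolding S_def by auto
  then have S: "0 < S" unfolding S_def by (simp add: order_le_neq_trans sum_nonneg)
  then have descent: "(\<Sum>e\<in>E. gt e * \<Delta> e) \<le> - \<kappa> * S"
    using desc unfolding S_def[symmetric] by (simp add: divide_le_eq)
  have E_ne: "E \<noteq> {}" using S unfolding S_def by auto
  then have m: "1 \<le> card E" using finE by (simp add: Suc_leI card_gt_0_iff)
  obtain e0 where "e0 \<in> E" using E_ne by blast
  then have U: "1 \<le> U" using bd_e f_int by (intro abs_bound_ge_one_of_less[of "um e0" "up e0"]) force+
  have g_close: "\<forall>e\<in>E. \<bar>gt e - grad (card E) ?a ?Fs c um up E f e\<bar> \<le> \<epsilon> * lengths ?a um up f e"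
  proof
    fix e assume "e \<in> E"
    with g_approx f_int lengths_pos[of um e f up ?a]
    show "\<bar>gt e - grad (card E) ?a ?Fs c um up E f e\<bar> \<le> \<epsilon> * lengths ?a um up f e"
      by (simp add: divide_le_eq mult.commute)
  qed
  show ?thesis
  proof (cases "?a \<le> 9")
    case True
    have "0 \<le> ?a" using alpha_nonneg[OF m U] .
    moreover have "\<forall>e\<in>E. lengths ?a um up f e \<le> 2 * lt e" using lt_approx by fastforce
    ultimately show ?thesis
      using True f_gap eps kap
      by (intro relative_cost_change_le[OF finE E_ne _ f_int _ _ kap(1) _ g_close _ descent[unfolded S_def]])
        auto
  next
    case False
    then have "card E = 1" "U < 2" using alpha_large_imp_trivial_size[OF m U] by auto
    then obtain e where E: "E = {e}" by (auto simp: card_1_singleton_iff)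
    have "\<Delta> e \<noteq> 0" using S unfolding S_def E by auto
    moreover have "BT {e} src dst \<Delta> (src e) = 0" using circ ends unfolding E by simp
    ultimately have loop: "src e = dst e" unfolding BT_singleton by (auto split: if_splits)
    have Fs: "?Fs = min (real_of_int (c e) * um e) (real_of_int (c e) * up e)"
      using feas Fstar_self_loop[where src = src and dst = dst, OF E loop] by blast
    have "\<bar>um e\<bar> < 2" "\<bar>up e\<bar> < 2" "\<bar>c e\<bar> < 2" using bd_e \<open>U < 2\<close> unfolding E by auto
    then have width: "up e - um e \<le> 2" and c: "\<bar>c e\<bar> \<le> 1" by auto
    have "\<bar>c e * \<Delta> e\<bar> / (c e * f e - ?Fs) \<le> \<bar>gt e * \<Delta> e\<bar> / \<kappa>"
      using f_int g_close lt_approx descent kap eps False \<open>card E = 1\<close> unfolding E S_def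
      by (intro single_edge_relative_cost_change_le[where e = e and um = um and up = up and f = f and c = c,
            OF _ _ width c Fs[unfolded E]]) auto
    then show ?thesis unfolding E by simp
  qed
qed

end
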